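(* Let $I\subset\mathbb R$ be a bounded closed non-degenerate interval, $r>1$, and $f,g\in L^r(I)$ with $f\le g$. Then $\tau_r^f\le\tau_r^g$, and $\tau_r^f=\tau_r^g$ if and only if $f=g$ a.e.
   Context: For $h\in L^r(I)$ with $r>1$, $\tau_r^h$ denotes the unique real number minimizing $t\mapsto\|h-t\|_{L^r(I)}$. *)

theory Defs
  imports "HOL-Analysis.Analysis"
begin

definition in_Lr :: "real \<Rightarrow> real set \<Rightarrow> (real \<Rightarrow> real) \<Rightarrow> bool" where
  "in_Lr r I h \<longleftrightarrow> h \<in> borel_measurable (lebesgue_on I) \<and>
     integrable (lebesgue_on I) (\<lambda>x. \<bar>h x\<bar> powr r)"

definition Lr_norm :: "real \<Rightarrow> real set \<Rightarrow> (real \<Rightarrow> real) \<Rightarrow> real" where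
  "Lr_norm r I h = (integral\<^sup>L (lebesgue_on I) (\<lambda>x. \<bar>h x\<bar> powr r)) powr (1 / r)"

definition tau :: "real \<Rightarrow> real set \<Rightarrow> (real \<Rightarrow> real) \<Rightarrow> real" where
  "tau r I h = (THE t. \<forall>s. Lr_norm r I (\<lambda>x. h x - t) \<le> Lr_norm r I (\<lambda>x. h x - s))"

end

theory Submission
  imports Defs
begin

text \<open>
  Write \<open>\<Phi>\<^sub>h(t) = \<integral>|h - t|\<^sup>r\<close> (\<open>power_dev\<close>), so that \<open>\<tau>\<^sub>r\<^sup>h\<close> is the minimiser of \<open>\<Phi>\<^sub>h\<close>. A minimiser exists because
  \<open>\<Phi>\<^sub>h\<close> is continuous and coercive, and at any minimiser \<open>t\<close> the Euler--Lagrange equation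
  \<open>\<integral> \<psi>(h - t) = 0\<close> holds, where \<open>\<psi>(u) = sgn u |u|\<^sup>r\<^sup>-\<^sup>1\<close> (\<open>signed_powr\<close>) is \<open>1/r\<close> times the derivative of \<open>|u|\<^sup>r\<close>;
  it is obtained from the supporting-line inequality of the convex function \<open>|u|\<^sup>r\<close> by letting the
  competitor tend to \<open>t\<close> from both sides. As \<open>\<psi>\<close> is strictly increasing,
  \<open>G\<^sub>h(t) = \<integral> \<psi>(h - t)\<close> is strictly decreasing in \<open>t\<close>, which makes the minimiser unique, and
  \<open>f \<le> g\<close> gives \<open>G\<^sub>f \<le> G\<^sub>g\<close>. Hence \<open>G\<^sub>f(\<tau>\<^sup>g) \<le> G\<^sub>g(\<tau>\<^sup>g) = 0 = G\<^sub>f(\<tau>\<^sup>f)\<close> forces \<open>\<tau>\<^sup>f \<le> \<tau>\<^sup>g\<close>; if the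
  two coincide, \<open>\<psi>(g - t) - \<psi>(f - t)\<close> is a nonnegative function with integral \<open>0\<close>, so \<open>f = g\<close> a.e.
  Everything except the final translation to \<open>\<tau>\<close> holds for an arbitrary finite measure of
  positive total mass.
\<close>

text \<open>Positive and negative parts rather than \<open>sgn\<close> make continuity at \<open>0\<close> immediate.\<close>
definition signed_powr :: "real \<Rightarrow> real \<Rightarrow> real" where
  "signed_powr r u = max u 0 powr (r - 1) - max (- u) 0 powr (r - 1)"

lemma signed_powr_nonneg: "0 \<le> u \<Longrightarrow> signed_powr r u = u powr (r - 1)"
  by (simp add: signed_powr_def max_def)

lemma signed_powr_nonpos: "u \<le> 0 \<Longrightarrow> signed_powr r u = - ((- u) powr (r - 1))"
  by (simp add: signed_powr_def max_def)

lemma abs_signed_powr: "\<bar>signed_powr r u\<bar> = \<bar>u\<bar> powr (r - 1)"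
  by (cases "u \<ge> 0") (auto simp: signed_powr_nonneg signed_powr_nonpos)

lemma strict_mono_signed_powr:
  assumes "1 < r"
  shows "strict_mono (signed_powr r)"
proof (rule strict_monoI)
  fix u v :: real
  assume "u < v"
  then consider "0 \<le> u" | "u < 0" "0 \<le> v" | "v < 0" by linarith
  then show "signed_powr r u < signed_powr r v"
  proof cases
    case 1
    then show ?thesis using \<open>u < v\<close> assms by (simp add: signed_powr_nonneg powr_less_mono2)
  next
    case 2
    then have "signed_powr r u < 0" "0 \<le> signed_powr r v"
      by (simp_all add: signed_powr_nonneg signed_powr_nonpos)
    then show ?thesis by linarith
  next
    case 3
    then show ?thesis using \<open>u < v\<close> assms by (simp add: signed_powr_nonpos powr_less_mono2)
  qed
qed

lemma continuous_on_signed_powr: "1 < r \<Longrightarrow> continuous_on UNIV (signed_powr r)"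
  unfolding signed_powr_def
  by (intro continuous_on_diff continuous_on_powr') (auto intro!: continuous_intros)

lemma abs_signed_powr_le:
  assumes "1 < r"
  shows "\<bar>signed_powr r u\<bar> \<le> 1 + \<bar>u\<bar> powr r"
proof (cases "\<bar>u\<bar> \<le> 1")
  case True
  with assms show ?thesis by (simp add: abs_signed_powr powr_le1 add_increasing2)
next
  case False
  with assms have "\<bar>u\<bar> powr (r - 1) \<le> \<bar>u\<bar> powr r" by (intro powr_mono) auto
  then show ?thesis by (simp add: abs_signed_powr)
qed

lemma has_real_derivative_abs_powr:
  assumes r: "1 < r"
  shows "((\<lambda>u. \<bar>u\<bar> powr r) has_real_derivative r * signed_powr r u) (at u)"
proof -
  consider "0 < u" | "u < 0" | "u = 0" by linarith
  then show ?thesis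
  proof cases
    case 1
    have ev: "\<forall>\<^sub>F v in nhds u. \<bar>v\<bar> powr r = v powr r"
      using eventually_nhds_in_open[of "{0<..}" u] 1 by (auto elim!: eventually_mono)
    have "((\<lambda>v. v powr r) has_real_derivative r * signed_powr r u) (at u)"
      using has_real_derivative_powr[OF 1, of r] 1 by (simp add: signed_powr_nonneg)
    then show ?thesis
      by (subst DERIV_cong_ev[OF refl ev refl])
  next
    case 2
    have ev: "\<forall>\<^sub>F v in nhds u. \<bar>v\<bar> powr r = (- v) powr r"
      using eventually_nhds_in_open[of "{..<0}" u] 2 by (auto elim!: eventually_mono)
    have "((\<lambda>v. (- v) powr r) has_real_derivative r * signed_powr r u) (at u)"
      using 2 by (auto intro!: derivative_eq_intros simp: signed_powr_nonpos)
    then show ?thesis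
      by (subst DERIV_cong_ev[OF refl ev refl])
  next
    case 3
    have "((\<lambda>v. \<bar>v\<bar> powr (r - 1)) \<longlongrightarrow> 0) (at 0)"
      using r by (intro tendsto_zero_powrI) (auto intro!: tendsto_eq_intros)
    moreover have "\<forall>\<^sub>F v in at 0. \<bar>v\<bar> powr (r - 1) = \<bar>(\<bar>0 + v\<bar> powr r - \<bar>0\<bar> powr r) / v\<bar>"
      using r by (auto simp: eventually_at_filter powr_diff abs_divide)
    ultimately have "((\<lambda>v. \<bar>(\<bar>0 + v\<bar> powr r - \<bar>0\<bar> powr r) / v\<bar>) \<longlongrightarrow> 0) (at 0)"
      by (rule Lim_transform_eventually)
    then have "((\<lambda>v. (\<bar>0 + v\<bar> powr r - \<bar>0\<bar> powr r) / v) \<longlongrightarrow> 0) (at 0)"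
      by (rule tendsto_rabs_zero_cancel)
    then show ?thesis
      using 3 by (simp add: DERIV_def signed_powr_def)
  qed
qed

lemma convex_on_abs_powr:
  assumes "1 < r"
  shows "convex_on UNIV (\<lambda>u. \<bar>u\<bar> powr r)"
proof (rule convex_on_realI)
  show "((\<lambda>u. \<bar>u\<bar> powr r) has_real_derivative r * signed_powr r u) (at u)" for u
    using has_real_derivative_abs_powr[OF assms] .
  show "r * signed_powr r u \<le> r * signed_powr r v" if "u \<le> v" for u v
    using strict_mono_mono[OF strict_mono_signed_powr[OF assms]] that assms
    by (simp add: monoD)
qed simp

lemma abs_powr_above_tangent:
  assumes "1 < r"
  shows "\<bar>u\<bar> powr r + r * signed_powr r u * (v - u) \<le> \<bar>v\<bar> powr r"
  using convex_on_imp_above_tangent[OF convex_on_abs_powr[OF assms]] has_real_derivative_abs_powr[OF assms]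
  by (fastforce simp: algebra_simps)

lemma abs_powr_add_le:
  fixes x y r :: real
  assumes "0 \<le> r"
  shows "\<bar>x + y\<bar> powr r \<le> 2 powr r * (\<bar>x\<bar> powr r + \<bar>y\<bar> powr r)"
proof -
  have "\<bar>x + y\<bar> powr r \<le> (2 * max \<bar>x\<bar> \<bar>y\<bar>) powr r"
    using assms by (intro powr_mono2) auto
  also have "\<dots> = 2 powr r * max \<bar>x\<bar> \<bar>y\<bar> powr r"
    by (simp add: powr_mult)
  also have "\<dots> \<le> 2 powr r * (\<bar>x\<bar> powr r + \<bar>y\<bar> powr r)"
    by (intro mult_left_mono) (auto simp: max_def)
  finally show ?thesis .
qed

lemma powr_le_powr_iff: "0 < p \<Longrightarrow> 0 \<le> x \<Longrightarrow> 0 \<le> y \<Longrightarrow> x powr p \<le> y powr p \<longleftrightarrow> x \<le> y"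
  for p x y :: real
  by (meson not_le powr_less_mono2 powr_mono2 less_imp_le)

lemma continuous_coercive_has_min:
  fixes f :: "real \<Rightarrow> real"
  assumes "continuous_on UNIV f" and "\<And>t. R < \<bar>t\<bar> \<Longrightarrow> f 0 \<le> f t"
  shows "\<exists>t. \<forall>s. f t \<le> f s"
proof -
  have "{-\<bar>R\<bar>..\<bar>R\<bar>} \<noteq> {}" by simp
  from continuous_attains_inf[OF compact_Icc this continuous_on_subset[OF assms(1)]]
  obtain t where t: "\<forall>s \<in> {-\<bar>R\<bar>..\<bar>R\<bar>}. f t \<le> f s" by blast
  have "f t \<le> f s" for s
  proof (cases "\<bar>s\<bar> \<le> \<bar>R\<bar>")
    case True
    then show ?thesis using t by (simp add: abs_le_iff)
  next
    case False
    then have "f 0 \<le> f s" using assms(2) by simp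
    moreover have "f t \<le> f 0" using t by simp
    ultimately show ?thesis by linarith
  qed
  then show ?thesis by blast
qed

definition power_dev :: "'a measure \<Rightarrow> real \<Rightarrow> ('a \<Rightarrow> real) \<Rightarrow> real \<Rightarrow> real" where
  "power_dev M r h t = (\<integral>x. \<bar>h x - t\<bar> powr r \<partial>M)"

context finite_measure
begin

lemma integrable_abs_powr_diff:
  fixes h :: "'a \<Rightarrow> real"
  assumes "0 \<le> r" and [measurable]: "h \<in> borel_measurable M"
    and "integrable M (\<lambda>x. \<bar>h x\<bar> powr r)"
  shows "integrable M (\<lambda>x. \<bar>h x - c\<bar> powr r)"
proof (rule Bochner_Integration.integrable_bound)
  show "integrable M (\<lambda>x. 2 powr r * (\<bar>h x\<bar> powr r + \<bar>c\<bar> powr r))"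
    using assms(3) by (intro integrable_mult_right Bochner_Integration.integrable_add) auto
  show "AE x in M. norm (\<bar>h x - c\<bar> powr r) \<le> norm (2 powr r * (\<bar>h x\<bar> powr r + \<bar>c\<bar> powr r))"
    using abs_powr_add_le[OF assms(1), of "h x" "- c" for x] by (intro AE_I2) simp
  show "(\<lambda>x. \<bar>h x - c\<bar> powr r) \<in> borel_measurable M"
    by measurable
qed

context
  fixes r :: real and h :: "'a \<Rightarrow> real"
  assumes r: "1 < r"
    and h_measurable [measurable]: "h \<in> borel_measurable M"
    and h_integrable: "integrable M (\<lambda>x. \<bar>h x\<bar> powr r)"
begin

lemma integrable_power_dev: "integrable M (\<lambda>x. \<bar>h x - t\<bar> powr r)"
  using r h_integrable by (intro integrable_abs_powr_diff) auto

lemma integrable_signed_powr_diff: "integrable M (\<lambda>x. signed_powr r (h x - t))"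
proof (rule Bochner_Integration.integrable_bound)
  show "integrable M (\<lambda>x. 1 + \<bar>h x - t\<bar> powr r)"
    using integrable_power_dev by auto
  show "AE x in M. norm (signed_powr r (h x - t)) \<le> norm (1 + \<bar>h x - t\<bar> powr r)"
    using abs_signed_powr_le[OF r] by auto
  show "(\<lambda>x. signed_powr r (h x - t)) \<in> borel_measurable M"
    using borel_measurable_continuous_onI[OF continuous_on_signed_powr[OF r]] by measurable
qed

lemma continuous_on_integral_comp_diff:
  assumes F: "continuous_on UNIV F" and F_bound: "\<And>u. \<bar>F u\<bar> \<le> 1 + \<bar>u\<bar> powr r"
  shows "continuous_on UNIV (\<lambda>t. \<integral>x. F (h x - t) \<partial>M)"
proof (rule continuous_on_sequentiallyI)
  fix c :: "nat \<Rightarrow> real" and t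
  assume c: "c \<longlonglongrightarrow> t"
  then have "Bseq c" by (intro convergent_imp_Bseq convergentI)
  then obtain K where K: "\<And>n. \<bar>c n\<bar> \<le> K" by (auto simp: Bseq_def)
  have F_measurable: "(\<lambda>x. F (h x - s)) \<in> borel_measurable M" for s
    using borel_measurable_continuous_onI[OF F] by (rule measurable_compose[rotated]) simp
  show "(\<lambda>n. \<integral>x. F (h x - c n) \<partial>M) \<longlonglongrightarrow> \<integral>x. F (h x - t) \<partial>M"
  proof (rule integral_dominated_convergence[where w = "\<lambda>x. 1 + \<bar>\<bar>h x\<bar> + K\<bar> powr r"])
    show "integrable M (\<lambda>x. 1 + \<bar>\<bar>h x\<bar> + K\<bar> powr r)"
      using integrable_abs_powr_diff[of r "\<lambda>x. \<bar>h x\<bar>" "- K"] r h_integrable by auto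
    show "AE x in M. (\<lambda>n. F (h x - c n)) \<longlonglongrightarrow> F (h x - t)"
      using F c by (intro AE_I2 isCont_tendsto_compose[where g = F] tendsto_intros)
        (auto simp: continuous_on_eq_continuous_at)
    show "AE x in M. norm (F (h x - c n)) \<le> 1 + \<bar>\<bar>h x\<bar> + K\<bar> powr r" for n
    proof (rule AE_I2)
      fix x
      have "\<bar>h x - c n\<bar> \<le> \<bar>\<bar>h x\<bar> + K\<bar>" using K[of n] by linarith
      then have "\<bar>h x - c n\<bar> powr r \<le> \<bar>\<bar>h x\<bar> + K\<bar> powr r" using r by (intro powr_mono2) auto
      then show "norm (F (h x - c n)) \<le> 1 + \<bar>\<bar>h x\<bar> + K\<bar> powr r"
        using F_bound[of "h x - c n"] by simp
    qed
  qed (fact F_measurable)+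
qed

lemma continuous_on_power_dev: "continuous_on UNIV (power_dev M r h)"
  unfolding power_dev_def using r
  by (intro continuous_on_integral_comp_diff continuous_on_powr') (auto intro: continuous_intros)

lemma power_dev_coercive:
  "measure M (space M) * \<bar>t\<bar> powr r \<le> 2 powr r * (power_dev M r h t + power_dev M r h 0)"
proof -
  have "(\<integral>x. \<bar>t\<bar> powr r \<partial>M) \<le> (\<integral>x. 2 powr r * (\<bar>h x - t\<bar> powr r + \<bar>h x - 0\<bar> powr r) \<partial>M)"
  proof (rule integral_mono)
    show "integrable M (\<lambda>x. 2 powr r * (\<bar>h x - t\<bar> powr r + \<bar>h x - 0\<bar> powr r))"
      using integrable_power_dev h_integrable by auto
    show "\<bar>t\<bar> powr r \<le> 2 powr r * (\<bar>h x - t\<bar> powr r + \<bar>h x - 0\<bar> powr r)" for x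
      using abs_powr_add_le[of r "t - h x" "h x"] r by (simp add: abs_minus_commute)
  qed auto
  then show ?thesis
    using integrable_power_dev h_integrable by (simp add: power_dev_def)
qed

lemma power_dev_has_min:
  assumes "emeasure M (space M) \<noteq> 0"
  shows "\<exists>t. \<forall>s. power_dev M r h t \<le> power_dev M r h s"
proof (rule continuous_coercive_has_min[OF continuous_on_power_dev])
  define \<mu> where "\<mu> = measure M (space M)"
  have \<mu>: "0 < \<mu>"
    using assms by (simp add: \<mu>_def emeasure_eq_measure zero_less_measure_iff)
  define P0 where "P0 = power_dev M r h 0"
  fix t :: real
  assume "max 1 (2 * 2 powr r * P0 / \<mu>) < \<bar>t\<bar>"
  then have t: "1 < \<bar>t\<bar>" "2 * 2 powr r * P0 < \<mu> * \<bar>t\<bar>"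
    using \<mu> by (auto simp: pos_divide_less_eq mult.commute)
  have "\<bar>t\<bar> \<le> \<bar>t\<bar> powr r"
    using powr_mono[of 1 r "\<bar>t\<bar>"] t r by simp
  then have "\<mu> * \<bar>t\<bar> \<le> \<mu> * \<bar>t\<bar> powr r"
    using \<mu> by (intro mult_left_mono) auto
  then have "2 powr r * (2 * P0) < \<mu> * \<bar>t\<bar> powr r"
    using t(2) by (simp add: mult.left_commute)
  also have "\<dots> \<le> 2 powr r * (power_dev M r h t + P0)"
    using power_dev_coercive[of t] by (simp add: P0_def \<mu>_def)
  finally show "power_dev M r h 0 \<le> power_dev M r h t"
    by (simp add: P0_def)
qed

lemma power_dev_above_tangent:
  "power_dev M r h s + r * (s - t) * (\<integral>x. signed_powr r (h x - s) \<partial>M) \<le> power_dev M r h t"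
proof -
  have "(\<integral>x. \<bar>h x - s\<bar> powr r + r * (s - t) * signed_powr r (h x - s) \<partial>M) \<le> power_dev M r h t"
    unfolding power_dev_def
  proof (rule integral_mono)
    show "\<bar>h x - s\<bar> powr r + r * (s - t) * signed_powr r (h x - s) \<le> \<bar>h x - t\<bar> powr r" for x
      using abs_powr_above_tangent[OF r, of "h x - s" "h x - t"] by (simp add: algebra_simps)
  qed (use integrable_power_dev integrable_signed_powr_diff in auto)
  then show ?thesis
    using integrable_power_dev integrable_signed_powr_diff by (simp add: power_dev_def)
qed

lemma integral_signed_powr_eq_0_if_min:
  assumes min: "\<And>s. power_dev M r h t \<le> power_dev M r h s"
  shows "(\<integral>x. signed_powr r (h x - t) \<partial>M) = 0"
proof -
  define G where "G = (\<lambda>s. \<integral>x. signed_powr r (h x - s) \<partial>M)"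
  have "isCont G t"
    using continuous_on_integral_comp_diff[OF continuous_on_signed_powr[OF r] abs_signed_powr_le[OF r]]
    by (simp add: G_def continuous_on_eq_continuous_at)
  then have G_left: "(G \<longlongrightarrow> G t) (at_left t)" and G_right: "(G \<longlongrightarrow> G t) (at_right t)"
    by (auto simp: isCont_def intro: tendsto_within_subset)
  have slope: "r * (s - t) * G s \<le> 0" for s
    using power_dev_above_tangent[of s t] min[of s] by (simp add: G_def)
  have "0 \<le> G s" if "s < t" for s
  proof -
    have "r * (s - t) < 0" using that r by (simp add: mult_pos_neg)
    with slope[of s] show ?thesis by (auto simp: mult_le_0_iff)
  qed
  then have "0 \<le> G t"
    by (intro tendsto_lowerbound[OF G_left] eventually_at_leftI[of "t - 1"]) auto
  moreover have "G s \<le> 0" if "t < s" for s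
    using slope[of s] that r by (auto simp: mult_le_0_iff)
  then have "G t \<le> 0"
    by (intro tendsto_upperbound[OF G_right] eventually_at_rightI[of t "t + 1"]) auto
  ultimately show ?thesis by (simp add: G_def)
qed

lemma integral_signed_powr_strict_antimono:
  assumes "emeasure M (space M) \<noteq> 0" and "s < t"
  shows "(\<integral>x. signed_powr r (h x - t) \<partial>M) < (\<integral>x. signed_powr r (h x - s) \<partial>M)"
  using assms strict_mono_signed_powr[OF r]
  by (intro integral_less_AE_space integrable_signed_powr_diff AE_I2) (auto simp: strict_mono_less)

lemma power_dev_min_unique:
  assumes "emeasure M (space M) \<noteq> 0"
    and "\<And>s. power_dev M r h t1 \<le> power_dev M r h s" and "\<And>s. power_dev M r h t2 \<le> power_dev M r h s"
  shows "t1 = t2"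
  using integral_signed_powr_eq_0_if_min[OF assms(2)] integral_signed_powr_eq_0_if_min[OF assms(3)]
    integral_signed_powr_strict_antimono[OF assms(1), of t1 t2]
    integral_signed_powr_strict_antimono[OF assms(1), of t2 t1]
  by (cases t1 t2 rule: linorder_cases) auto

end

lemma power_dev_cong_AE:
  assumes [measurable]: "f \<in> borel_measurable M" "g \<in> borel_measurable M"
    and "AE x in M. f x = g x"
  shows "power_dev M r f = power_dev M r g"
proof
  fix t
  have "AE x in M. \<bar>f x - t\<bar> powr r = \<bar>g x - t\<bar> powr r"
    using assms(3) by eventually_elim simp
  then show "power_dev M r f t = power_dev M r g t"
    unfolding power_dev_def by (intro integral_cong_AE) simp_all
qed

lemma integral_signed_powr_mono_AE:
  assumes r: "1 < r"
    and f: "f \<in> borel_measurable M" "integrable M (\<lambda>x. \<bar>f x\<bar> powr r)"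
    and g: "g \<in> borel_measurable M" "integrable M (\<lambda>x. \<bar>g x\<bar> powr r)"
    and fg: "AE x in M. f x \<le> g x"
  shows "(\<integral>x. signed_powr r (f x - t) \<partial>M) \<le> (\<integral>x. signed_powr r (g x - t) \<partial>M)"
proof (rule integral_mono_AE[OF integrable_signed_powr_diff[OF r f] integrable_signed_powr_diff[OF r g]])
  show "AE x in M. signed_powr r (f x - t) \<le> signed_powr r (g x - t)"
    using fg by eventually_elim (simp add: strict_mono_less_eq[OF strict_mono_signed_powr[OF r]])
qed

lemma AE_eq_if_integral_signed_powr_eq:
  assumes r: "1 < r"
    and f: "f \<in> borel_measurable M" "integrable M (\<lambda>x. \<bar>f x\<bar> powr r)"
    and g: "g \<in> borel_measurable M" "integrable M (\<lambda>x. \<bar>g x\<bar> powr r)"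
    and fg: "AE x in M. f x \<le> g x"
    and eq: "(\<integral>x. signed_powr r (f x - t) \<partial>M) = (\<integral>x. signed_powr r (g x - t) \<partial>M)"
  shows "AE x in M. f x = g x"
proof -
  define D where "D x = signed_powr r (g x - t) - signed_powr r (f x - t)" for x
  have "integrable M D"
    unfolding D_def using integrable_signed_powr_diff[OF r f] integrable_signed_powr_diff[OF r g] by simp
  moreover have "AE x in M. 0 \<le> D x"
    using fg by eventually_elim (simp add: D_def strict_mono_less_eq[OF strict_mono_signed_powr[OF r]])
  moreover have "integral\<^sup>L M D = 0"
    unfolding D_def using eq integrable_signed_powr_diff[OF r f] integrable_signed_powr_diff[OF r g] by simp
  ultimately have "AE x in M. D x = 0"
    using integral_nonneg_eq_0_iff_AE by blast
  then show ?thesis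
    by eventually_elim (simp add: D_def strict_mono_eq[OF strict_mono_signed_powr[OF r]])
qed

theorem power_dev_min_mono:
  assumes r: "1 < r" and nonnull: "emeasure M (space M) \<noteq> 0"
    and f: "f \<in> borel_measurable M" "integrable M (\<lambda>x. \<bar>f x\<bar> powr r)"
    and g: "g \<in> borel_measurable M" "integrable M (\<lambda>x. \<bar>g x\<bar> powr r)"
    and fg: "AE x in M. f x \<le> g x"
    and tf: "\<And>s. power_dev M r f tf \<le> power_dev M r f s"
    and tg: "\<And>s. power_dev M r g tg \<le> power_dev M r g s"
  shows "tf \<le> tg \<and> (tf = tg \<longleftrightarrow> (AE x in M. f x = g x))"
proof -
  note f_root = integral_signed_powr_eq_0_if_min[OF r f tf]
  note g_root = integral_signed_powr_eq_0_if_min[OF r g tg]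
  have "tf \<le> tg"
  proof (rule ccontr)
    assume "\<not> tf \<le> tg"
    then have "0 < (\<integral>x. signed_powr r (f x - tg) \<partial>M)"
      using integral_signed_powr_strict_antimono[OF r f nonnull, of tg tf] f_root by simp
    then show False
      using integral_signed_powr_mono_AE[OF r f g fg, of tg] g_root by simp
  qed
  moreover have "tf = tg \<longleftrightarrow> (AE x in M. f x = g x)"
  proof
    assume "tf = tg"
    with f_root g_root have "(\<integral>x. signed_powr r (f x - tf) \<partial>M) = (\<integral>x. signed_powr r (g x - tf) \<partial>M)"
      by simp
    then show "AE x in M. f x = g x"
      by (rule AE_eq_if_integral_signed_powr_eq[OF r f g fg])
  next
    assume "AE x in M. f x = g x"
    then show "tf = tg"
      using power_dev_min_unique[OF r g nonnull _ tg] tf power_dev_cong_AE[OF f(1) g(1)] by metis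
  qed
  ultimately show ?thesis ..
qed

end

lemma tau_minimizes_power_dev:
  assumes ab: "a < b" and r: "1 < r" and h: "in_Lr r {a..b} h"
  shows "power_dev (lebesgue_on {a..b}) r h (tau r {a..b} h) \<le> power_dev (lebesgue_on {a..b}) r h s"
proof -
  interpret finite_measure "lebesgue_on {a..b}"
    by (rule finite_measure_lebesgue_on) auto
  let ?P = "power_dev (lebesgue_on {a..b}) r h"
  have nonnull: "emeasure (lebesgue_on {a..b}) (space (lebesgue_on {a..b})) \<noteq> 0"
    using ab by (simp add: emeasure_restrict_space)
  note h' = h[unfolded in_Lr_def, THEN conjunct1] h[unfolded in_Lr_def, THEN conjunct2]
  have norm_le_iff: "Lr_norm r {a..b} (\<lambda>x. h x - t) \<le> Lr_norm r {a..b} (\<lambda>x. h x - s) \<longleftrightarrow> ?P t \<le> ?P s"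
    for t s
    using r unfolding Lr_norm_def power_dev_def by (intro powr_le_powr_iff) auto
  obtain t where t: "\<And>s. ?P t \<le> ?P s"
    using power_dev_has_min[OF r h' nonnull] by blast
  have "tau r {a..b} h = t"
    unfolding tau_def norm_le_iff
    using t power_dev_min_unique[OF r h' nonnull] by (intro the_equality) blast+
  then show ?thesis using t by simp
qed

theorem proposition4:
  fixes a b r :: real and f g :: "real \<Rightarrow> real"
  assumes "a < b" and "r > 1"
    and "in_Lr r {a..b} f" and "in_Lr r {a..b} g"
    and "AE x in lebesgue_on {a..b}. f x \<le> g x"
  shows "tau r {a..b} f \<le> tau r {a..b} g \<and>
    (tau r {a..b} f = tau r {a..b} g \<longleftrightarrow> (AE x in lebesgue_on {a..b}. f x = g x))"
proof -
  interpret finite_measure "lebesgue_on {a..b}"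
    by (rule finite_measure_lebesgue_on) auto
  have nonnull: "emeasure (lebesgue_on {a..b}) (space (lebesgue_on {a..b})) \<noteq> 0"
    using assms(1) by (simp add: emeasure_restrict_space)
  have f: "f \<in> borel_measurable (lebesgue_on {a..b})" "integrable (lebesgue_on {a..b}) (\<lambda>x. \<bar>f x\<bar> powr r)"
    and g: "g \<in> borel_measurable (lebesgue_on {a..b})" "integrable (lebesgue_on {a..b}) (\<lambda>x. \<bar>g x\<bar> powr r)"
    using assms(3,4) by (simp_all add: in_Lr_def)
  show ?thesis
    using power_dev_min_mono[OF assms(2) nonnull f g assms(5)
        tau_minimizes_power_dev[OF assms(1-3)] tau_minimizes_power_dev[OF assms(1,2,4)]] .
qed

end
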